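(* For every integer $k\ge 1$ and every real $t$, $$R_{k}(t^{2})=-R_{k-1}(t^{2})+4t\,T_{2k-1}(t)+(-1)^{k-1}8t^{2}.$$ Consequently, for every $t\in(0,1]$ and every integer $k\ge 0$, $$\frac{|R_{k}(t^{2})|}{t}\leq 4(2k+1)t+4\sum_{j=1}^{k}\min\{1,(2j-1)t\}.$$
   Context: $T_k$ denotes the Chebyshev polynomial of the first kind: $T_0(t)=1$, $T_1(t)=t$, $T_{k+1}(t)=2tT_k(t)-T_{k-1}(t)$. For each integer $k\ge 0$, $P_k$ and $Q_k$ are the unique polynomials such that $T_{2k}(t)=(-1)^k+P_k(t^2)$ and $T_{2k+1}(t)=(-1)^k(2k+1)t+t\,Q_k(t^2)$ for all real $t$ (so $P_k(0)=Q_k(0)=0$). For $k\ge 0$ define $R_k(x):=2P_k(x)-4(-1)^k(2k+1)x$. *)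

theory Defs
  imports "HOL-Analysis.Analysis" "HOL-Computational_Algebra.Polynomial"
begin

fun cheb_T :: "nat \<Rightarrow> real \<Rightarrow> real" where
  "cheb_T 0 t = 1"
| "cheb_T (Suc 0) t = t"
| "cheb_T (Suc (Suc n)) t = 2 * t * cheb_T (Suc n) t - cheb_T n t"

definition cheb_P :: "nat \<Rightarrow> real poly" where
  "cheb_P k = (THE p. \<forall>t::real. cheb_T (2*k) t = (-1)^k + poly p (t^2))"

definition cheb_R :: "nat \<Rightarrow> real \<Rightarrow> real" where
  "cheb_R k x = 2 * poly (cheb_P k) x - 4 * (-1)^k * (2 * real k + 1) * x"

end

theory Submission
  imports Defs
begin

text \<open>Substituting the recurrence T_{2k+2}(t) = 2t T_{2k+1}(t) - T_{2k}(t) into the closed form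
  R_k(t^2) = 2 (T_{2k}(t) - (-1)^k) - 4 (-1)^k (2k+1) t^2 gives the recurrence for R_k.
  The bound then follows by induction on k and the triangle inequality, since
  |T_{2j-1}(t)| \<le> min 1 ((2j-1) t) on (0,1]: writing t = sin y = cos (pi/2 - y), the identity
  T_n(cos x) = cos (n x) turns T_{2j-1}(t) into \<plusminus>sin ((2j-1) y), and |sin (n y)| \<le> n |sin y|.\<close>

lemma cheb_T_cos: "cheb_T n (cos x) = cos (real n * x)"
proof (induction n rule: induct_nat_012)
  case (ge2 n)
  have "cos (real (Suc (Suc n)) * x) + cos (real n * x) = 2 * cos x * cos (real (Suc n) * x)"
    using cos_add[of "real (Suc n) * x" x] cos_diff[of "real (Suc n) * x" x]
    by (simp add: algebra_simps)
  with ge2 show ?case by simp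
qed simp_all

lemma abs_sin_mult_le: "\<bar>sin (real n * x)\<bar> \<le> real n * \<bar>sin x\<bar>"
proof (induction n)
  case (Suc n)
  have "sin (real (Suc n) * x) = sin (real n * x) * cos x + cos (real n * x) * sin x"
    by (simp add: algebra_simps sin_add)
  also have "\<bar>\<dots>\<bar> \<le> \<bar>sin (real n * x)\<bar> * \<bar>cos x\<bar> + \<bar>cos (real n * x)\<bar> * \<bar>sin x\<bar>"
    by (metis abs_mult abs_triangle_ineq)
  also have "\<dots> \<le> \<bar>sin (real n * x)\<bar> + \<bar>sin x\<bar>"
    by (intro add_mono mult_left_le mult_left_le_one_le) (auto simp: abs_cos_le_one)
  also have "\<dots> \<le> real (Suc n) * \<bar>sin x\<bar>"
    using Suc by (simp add: algebra_simps)
  finally show ?case .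
qed simp

lemma abs_cheb_T_le_one: "\<bar>t\<bar> \<le> 1 \<Longrightarrow> \<bar>cheb_T n t\<bar> \<le> 1"
  by (metis cos_arccos_abs cheb_T_cos abs_cos_le_one)

lemma abs_cheb_T_odd_le:
  assumes "\<bar>t\<bar> \<le> 1"
  shows "\<bar>cheb_T (2 * m + 1) t\<bar> \<le> real (2 * m + 1) * \<bar>t\<bar>"
proof -
  define y where "y = arcsin t"
  have t_sin: "t = sin y"
    using assms unfolding y_def by simp
  then have "t = cos (pi / 2 - y)"
    by (simp add: cos_diff)
  then have "cheb_T (2 * m + 1) t = cos (real m * pi + pi / 2 - real (2 * m + 1) * y)"
    by (simp add: cheb_T_cos algebra_simps)
  also have "\<dots> = (-1) ^ m * sin (real (2 * m + 1) * y)"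
    by (simp add: cos_diff cos_add sin_add)
  finally have "\<bar>cheb_T (2 * m + 1) t\<bar> = \<bar>sin (real (2 * m + 1) * y)\<bar>"
    by (simp add: abs_mult)
  with abs_sin_mult_le t_sin show ?thesis
    by metis
qed

lemma cheb_T_even_odd_poly:
  "\<exists>p q. (\<forall>t. cheb_T (2 * n) t = poly p (t\<^sup>2)) \<and> (\<forall>t. cheb_T (2 * n + 1) t = t * poly q (t\<^sup>2))"
proof (induction n)
  case 0
  show ?case
    by (rule exI[of _ "[:1:]"], rule exI[of _ "[:1:]"]) simp
next
  case (Suc n)
  then obtain p q where p: "\<And>t. cheb_T (2 * n) t = poly p (t\<^sup>2)"
    and q: "\<And>t. cheb_T (2 * n + 1) t = t * poly q (t\<^sup>2)"
    by blast
  define p' where "p' = smult 2 (pCons 0 q) - p"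
  define q' where "q' = smult 2 p' - q"
  have p': "cheb_T (2 * Suc n) t = poly p' (t\<^sup>2)" for t
    using p q by (simp add: numeral_2_eq_2 p'_def power2_eq_square algebra_simps)
  have "cheb_T (2 * Suc n + 1) t = t * poly q' (t\<^sup>2)" for t
    using p' q by (simp add: numeral_2_eq_2 q'_def algebra_simps)
  with p' show ?case
    by blast
qed

lemma poly_eqI_on_squares:
  fixes p q :: "real poly"
  assumes "\<And>t. poly p (t\<^sup>2) = poly q (t\<^sup>2)"
  shows "p = q"
proof -
  have "poly p x = poly q x" if "x \<ge> 0" for x
    using assms[of "sqrt x"] that by simp
  then have "{0..} \<subseteq> {x. poly (p - q) x = 0}"
    by auto
  then have "infinite {x. poly (p - q) x = 0}"
    using infinite_Ici finite_subset by blast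
  then have "p - q = 0"
    using poly_roots_finite by blast
  then show ?thesis
    by simp
qed

lemma poly_cheb_P: "poly (cheb_P k) (t\<^sup>2) = cheb_T (2 * k) t - (-1) ^ k"
proof -
  obtain p where p: "\<And>t. cheb_T (2 * k) t = poly p (t\<^sup>2)"
    using cheb_T_even_odd_poly by blast
  have "\<exists>!q. \<forall>t::real. cheb_T (2 * k) t = (-1) ^ k + poly q (t\<^sup>2)"
  proof (rule ex1I[of _ "p - [:(-1) ^ k:]"])
    fix q
    assume "\<forall>t::real. cheb_T (2 * k) t = (-1) ^ k + poly q (t\<^sup>2)"
    then have "poly q (t\<^sup>2) = poly (p - [:(-1) ^ k:]) (t\<^sup>2)" for t :: real
      using p[of t] by simp
    then show "q = p - [:(-1) ^ k:]"
      by (rule poly_eqI_on_squares)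
  qed (simp add: p)
  from theI'[OF this] have "\<forall>t::real. cheb_T (2 * k) t = (-1) ^ k + poly (cheb_P k) (t\<^sup>2)"
    unfolding cheb_P_def .
  then show ?thesis
    by simp
qed

lemma cheb_R_square:
  "cheb_R k (t\<^sup>2) = 2 * (cheb_T (2 * k) t - (-1) ^ k) - 4 * (-1) ^ k * (2 * real k + 1) * t\<^sup>2"
  unfolding cheb_R_def poly_cheb_P ..

lemma cheb_R_Suc_square:
  "cheb_R (Suc k) (t\<^sup>2) = - cheb_R k (t\<^sup>2) + 4 * t * cheb_T (2 * k + 1) t + (-1) ^ k * 8 * t\<^sup>2"
proof -
  have "cheb_T (2 * Suc k) t = 2 * t * cheb_T (2 * k + 1) t - cheb_T (2 * k) t"
    by (simp add: numeral_2_eq_2)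
  then show ?thesis
    unfolding cheb_R_square by (simp add: algebra_simps)
qed

lemma abs_cheb_R_square_le:
  assumes "0 < t" "t \<le> 1"
  shows "\<bar>cheb_R k (t\<^sup>2)\<bar>
    \<le> t * (4 * (2 * real k + 1) * t + 4 * (\<Sum>j=1..k. min 1 ((2 * real j - 1) * t)))"
proof (induction k)
  case 0
  have "cheb_R 0 (t\<^sup>2) = - 4 * t\<^sup>2"
    unfolding cheb_R_square by simp
  then show ?case
    using assms by (simp add: power2_eq_square)
next
  case (Suc k)
  have T_bound: "\<bar>cheb_T (2 * k + 1) t\<bar> \<le> min 1 ((2 * real (Suc k) - 1) * t)"
    using abs_cheb_T_le_one[of t] abs_cheb_T_odd_le[of t k] assms by auto
  have "\<bar>4 * t * cheb_T (2 * k + 1) t\<bar> = 4 * t * \<bar>cheb_T (2 * k + 1) t\<bar>"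
    "\<bar>(-1) ^ k * 8 * t\<^sup>2\<bar> = 8 * t\<^sup>2"
    using assms by (simp_all add: abs_mult)
  then have "\<bar>cheb_R (Suc k) (t\<^sup>2)\<bar> \<le> \<bar>cheb_R k (t\<^sup>2)\<bar> + 4 * t * \<bar>cheb_T (2 * k + 1) t\<bar> + 8 * t\<^sup>2"
    unfolding cheb_R_Suc_square by linarith
  also have "\<dots> \<le> t * (4 * (2 * real k + 1) * t + 4 * (\<Sum>j=1..k. min 1 ((2 * real j - 1) * t)))
      + 4 * t * min 1 ((2 * real (Suc k) - 1) * t) + 8 * t\<^sup>2"
    using Suc T_bound assms by (intro add_mono mult_left_mono) auto
  also have "\<dots> = t * (4 * (2 * real (Suc k) + 1) * t
      + 4 * (\<Sum>j=1..Suc k. min 1 ((2 * real j - 1) * t)))"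
    by (simp add: algebra_simps power2_eq_square)
  finally show ?case .
qed

theorem mainTheorem2:
  shows "(\<forall>(k::nat) (t::real). k \<ge> 1 \<longrightarrow>
            cheb_R k (t^2) = - cheb_R (k - 1) (t^2) + 4 * t * cheb_T (2*k - 1) t
                             + (-1)^(k - 1) * 8 * t^2)
       \<and> (\<forall>(k::nat) (t::real). 0 < t \<and> t \<le> 1 \<longrightarrow>
            \<bar>cheb_R k (t^2)\<bar> / t \<le> 4 * (2 * real k + 1) * t
                + 4 * (\<Sum>j=1..k. min 1 ((2 * real j - 1) * t)))"
proof (intro conjI allI impI)
  fix k :: nat and t :: real
  assume "k \<ge> 1"
  then obtain m where "k = Suc m"
    using not0_implies_Suc by fastforce
  then show "cheb_R k (t^2) = - cheb_R (k - 1) (t^2) + 4 * t * cheb_T (2*k - 1) t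
      + (-1)^(k - 1) * 8 * t^2"
    using cheb_R_Suc_square[of m t] by simp
next
  fix k :: nat and t :: real
  assume "0 < t \<and> t \<le> 1"
  then show "\<bar>cheb_R k (t^2)\<bar> / t \<le> 4 * (2 * real k + 1) * t
      + 4 * (\<Sum>j=1..k. min 1 ((2 * real j - 1) * t))"
    using abs_cheb_R_square_le[of t k] by (simp add: divide_le_eq mult.commute)
qed

end
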